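(* For $q^ip^j\in\mathcal{C}(p,q)$ and $n\in\omega$ let $U_n(q^ip^j)=\{q^ip^j\}\cup\{q^sp^t: s,t\ge n\}$, and let $\tau_1$ be the topology on $\mathcal{C}(p,q)$ generated by the neighbourhood bases $\{U_n(q^ip^j):n\in\omega\}$ at each point $q^ip^j$. Then $(\mathcal{C}(p,q),\tau_1)$ is a $T_1$ topological inverse semigroup (semigroup operation jointly continuous and inversion continuous).
   Context: The bicyclic monoid $\mathcal{C}(p,q)$ is the monoid generated by $p,q$ subject only to $pq=1$; elements are uniquely $q^ip^j$, $i,j\in\omega$, with multiplication $q^kp^l\cdot q^mp^n = q^{k-l+m}p^n$ if $l<m$, $=q^kp^n$ if $l=m$, $=q^kp^{l-m+n}$ if $l>m$, and inversion $(q^ip^j)^{-1}=q^jp^i$. *)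

theory Defs
  imports "HOL-Analysis.Analysis"
begin

text \<open>The bicyclic monoid C(p,q): the element q^i p^j is represented by the pair (i,j).\<close>

type_synonym bicyclic = "nat \<times> nat"

definition bic_mult :: "bicyclic \<Rightarrow> bicyclic \<Rightarrow> bicyclic" where
  "bic_mult x y = (case x of (k,l) \<Rightarrow> case y of (m,n) \<Rightarrow>
     if l < m then (k + m - l, n)
     else if l = m then (k, n)
     else (k, l + n - m))"

definition bic_inv :: "bicyclic \<Rightarrow> bicyclic" where
  "bic_inv x = (case x of (i,j) \<Rightarrow> (j,i))"

definition U_nbhd :: "nat \<Rightarrow> bicyclic \<Rightarrow> bicyclic set" where
  "U_nbhd n x = {x} \<union> {(s,t). s \<ge> n \<and> t \<ge> n}"

definition tau1 :: "bicyclic topology" where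
  "tau1 = topology (\<lambda>S. \<forall>x\<in>S. \<exists>n. U_nbhd n x \<subseteq> S)"

end

theory Submission
  imports Defs
begin

text \<open>Every \<open>U\<^sub>n(x)\<close> is \<open>x\<close> together with the common tail \<open>{q\<^sup>sp\<^sup>t : s, t \<ge> n}\<close>.
  The multiplication is continuous because it cannot pull elements out of the tail by much:
  the \<open>q\<close>-exponent of \<open>xy\<close> is at least that of \<open>x\<close> and at least that of \<open>y\<close> minus the
  \<open>p\<close>-exponent of \<open>x\<close>, and symmetrically for the \<open>p\<close>-exponent. So \<open>U\<^sub>m(a) U\<^sub>m(b) \<subseteq> U\<^sub>n(ab)\<close>
  as soon as \<open>m \<ge> n + j + k\<close> for \<open>a = q\<^sup>ip\<^sup>j\<close>, \<open>b = q\<^sup>kp\<^sup>l\<close>. Inversion swaps the exponents and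
  hence maps \<open>U\<^sub>n(x)\<close> onto \<open>U\<^sub>n(x\<^sup>-\<^sup>1)\<close>.\<close>

lemma U_nbhd_mono: "n \<le> m \<Longrightarrow> U_nbhd m x \<subseteq> U_nbhd n x"
  unfolding U_nbhd_def by auto

lemma self_in_U_nbhd: "x \<in> U_nbhd n x"
  unfolding U_nbhd_def by auto

lemma U_nbhd_subset_U_nbhd: "z \<in> U_nbhd n x \<Longrightarrow> U_nbhd n z \<subseteq> U_nbhd n x"
  unfolding U_nbhd_def by auto

lemma istopology_U_nbhd: "istopology (\<lambda>S. \<forall>x\<in>S. \<exists>n. U_nbhd n x \<subseteq> S)"
  unfolding istopology_def
proof (intro conjI allI impI ballI)
  fix S T x
  assume "\<forall>x\<in>S. \<exists>n. U_nbhd n x \<subseteq> S" "\<forall>x\<in>T. \<exists>n. U_nbhd n x \<subseteq> T" "x \<in> S \<inter> T"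
  then obtain n m where "U_nbhd n x \<subseteq> S" "U_nbhd m x \<subseteq> T" by blast
  then have "U_nbhd (max n m) x \<subseteq> S \<inter> T"
    using U_nbhd_mono[of n "max n m" x] U_nbhd_mono[of m "max n m" x] by auto
  then show "\<exists>n. U_nbhd n x \<subseteq> S \<inter> T" by blast
next
  fix K :: "bicyclic set set" and x
  assume "\<forall>S\<in>K. \<forall>x\<in>S. \<exists>n. U_nbhd n x \<subseteq> S" "x \<in> \<Union> K"
  then show "\<exists>n. U_nbhd n x \<subseteq> \<Union> K" by (meson Union_iff subset_iff)
qed

lemma openin_tau1: "openin tau1 S \<longleftrightarrow> (\<forall>x\<in>S. \<exists>n. U_nbhd n x \<subseteq> S)"
  unfolding tau1_def using istopology_U_nbhd by (simp add: topology_inverse')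

lemma topspace_tau1 [simp]: "topspace tau1 = UNIV"
  unfolding topspace_def openin_tau1 by (auto simp: U_nbhd_def)

lemma openin_tau1_U_nbhd: "openin tau1 (U_nbhd n x)"
  unfolding openin_tau1 using U_nbhd_subset_U_nbhd by blast

lemma t1_space_tau1: "t1_space tau1"
  unfolding t1_space_def
proof (intro ballI impI)
  fix x y :: bicyclic
  assume "x \<noteq> y"
  then have "y \<notin> U_nbhd (Suc (fst y)) x" unfolding U_nbhd_def by auto
  then show "\<exists>U. openin tau1 U \<and> x \<in> U \<and> y \<notin> U"
    using openin_tau1_U_nbhd self_in_U_nbhd by blast
qed

lemma continuous_map_tau1I:
  assumes "\<And>x n. \<exists>m. f ` U_nbhd m x \<subseteq> U_nbhd n (f x)"
  shows "continuous_map tau1 tau1 f"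
  unfolding continuous_map_def
proof (intro conjI allI impI)
  fix W assume W: "openin tau1 W"
  have "\<exists>m. U_nbhd m x \<subseteq> {x \<in> topspace tau1. f x \<in> W}" if "f x \<in> W" for x
  proof -
    obtain n where "U_nbhd n (f x) \<subseteq> W"
      using W \<open>f x \<in> W\<close> unfolding openin_tau1 by blast
    moreover obtain m where "f ` U_nbhd m x \<subseteq> U_nbhd n (f x)"
      using assms by blast
    ultimately show ?thesis by auto
  qed
  then show "openin tau1 {x \<in> topspace tau1. f x \<in> W}"
    unfolding openin_tau1 by blast
qed simp

lemma continuous_map_prod_tau1I:
  assumes "\<And>a b n. \<exists>m. \<forall>u\<in>U_nbhd m a. \<forall>v\<in>U_nbhd m b. f (u, v) \<in> U_nbhd n (f (a, b))"
  shows "continuous_map (prod_topology tau1 tau1) tau1 f"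
  unfolding continuous_map_def
proof (intro conjI allI impI)
  fix W assume W: "openin tau1 W"
  have "openin (prod_topology tau1 tau1) (f -` W)"
    unfolding openin_prod_topology_alt
  proof (intro allI impI)
    fix a b assume "(a, b) \<in> f -` W"
    then obtain n where n: "U_nbhd n (f (a, b)) \<subseteq> W"
      using W unfolding openin_tau1 by blast
    obtain m where "\<forall>u\<in>U_nbhd m a. \<forall>v\<in>U_nbhd m b. f (u, v) \<in> U_nbhd n (f (a, b))"
      using assms by blast
    with n have "U_nbhd m a \<times> U_nbhd m b \<subseteq> f -` W"
      by blast
    then show "\<exists>U V. openin tau1 U \<and> openin tau1 V \<and> a \<in> U \<and> b \<in> V \<and> U \<times> V \<subseteq> f -` W"
      using openin_tau1_U_nbhd self_in_U_nbhd by meson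
  qed
  then show "openin (prod_topology tau1 tau1) {z \<in> topspace (prod_topology tau1 tau1). f z \<in> W}"
    by (simp add: vimage_def)
qed simp

lemma bic_mult_exponent_bounds:
  "fst x \<le> fst (bic_mult x y)" "fst y - snd x \<le> fst (bic_mult x y)"
  "snd y \<le> snd (bic_mult x y)" "snd x - fst y \<le> snd (bic_mult x y)"
  by (auto simp: bic_mult_def split: prod.splits)

lemma bic_mult_U_nbhd:
  assumes "u \<in> U_nbhd (n + snd a + fst b) a" and "v \<in> U_nbhd (n + snd a + fst b) b"
  shows "bic_mult u v \<in> U_nbhd n (bic_mult a b)"
proof -
  have "u = a \<or> n + snd a + fst b \<le> fst u \<and> n + snd a + fst b \<le> snd u"
    "v = b \<or> n + snd a + fst b \<le> fst v \<and> n + snd a + fst b \<le> snd v"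
    using assms unfolding U_nbhd_def by auto
  then have "u = a \<and> v = b \<or> n \<le> fst (bic_mult u v) \<and> n \<le> snd (bic_mult u v)"
    using bic_mult_exponent_bounds[where x = u and y = v] by auto
  then show ?thesis
    unfolding U_nbhd_def by (auto simp: case_prod_unfold)
qed

lemma bic_inv_U_nbhd: "bic_inv ` U_nbhd n x = U_nbhd n (bic_inv x)"
  unfolding U_nbhd_def bic_inv_def by (auto simp: case_prod_unfold image_iff)

theorem proposition1:
  shows "t1_space tau1
    \<and> continuous_map (prod_topology tau1 tau1) tau1 (\<lambda>(x, y). bic_mult x y)
    \<and> continuous_map tau1 tau1 bic_inv"
proof (intro conjI)
  show "t1_space tau1"
    by (rule t1_space_tau1)
  show "continuous_map (prod_topology tau1 tau1) tau1 (\<lambda>(x, y). bic_mult x y)"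
  proof (rule continuous_map_prod_tau1I)
    fix a b n
    show "\<exists>m. \<forall>u\<in>U_nbhd m a. \<forall>v\<in>U_nbhd m b.
        (\<lambda>(x, y). bic_mult x y) (u, v) \<in> U_nbhd n ((\<lambda>(x, y). bic_mult x y) (a, b))"
      using bic_mult_U_nbhd[of _ n a b] unfolding case_prod_conv by blast
  qed
  show "continuous_map tau1 tau1 bic_inv"
    by (rule continuous_map_tau1I) (use bic_inv_U_nbhd in blast)
qed

end
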